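(* Let $T$ be a locally finite tree, $G\leq\mathrm{Aut}(T)$ a closed subgroup and $g\in G$ hyperbolic such that one of its two fixed points in $\partial T$ has an open stabiliser in $G$. The following are equivalent: (i) both fixed points of $g$ have open stabilisers in $G$; (ii) $g\in G_0$; (iii) $g$ normalises a compact open subgroup of $G$. In particular, if $g\in G_0$ is hyperbolic, then either both or none of its fixed points have an open stabiliser.
   Context: $\mathrm{Aut}(T)$ has the topology of pointwise convergence. A hyperbolic automorphism fixes no vertex or edge and fixes exactly two points of $\partial T$. $G_0$ is the kernel of the modular function of $G$. *)

theory Defs
  imports "HOL-Analysis.Analysis"
begin

definition is_cycle :: "('v \<Rightarrow> 'v \<Rightarrow> bool) \<Rightarrow> 'v list \<Rightarrow> bool" where
  "is_cycle E xs \<longleftrightarrow> length xs \<ge> 3 \<and> distinct xs \<and>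
     (\<forall>i. Suc i < length xs \<longrightarrow> E (xs ! i) (xs ! Suc i)) \<and> E (last xs) (hd xs)"

definition locally_finite_tree :: "('v \<Rightarrow> 'v \<Rightarrow> bool) \<Rightarrow> bool" where
  "locally_finite_tree E \<longleftrightarrow>
     (\<forall>x y. E x y \<longrightarrow> E y x) \<and> (\<forall>x. \<not> E x x) \<and>
     (\<forall>x y. (x, y) \<in> {(a, b). E a b}\<^sup>*) \<and>
     (\<forall>xs. \<not> is_cycle E xs) \<and>
     (\<forall>x. finite {y. E x y})"

definition aut :: "('v \<Rightarrow> 'v \<Rightarrow> bool) \<Rightarrow> ('v \<Rightarrow> 'v) set" where
  "aut E = {f. bij f \<and> (\<forall>x y. E x y \<longleftrightarrow> E (f x) (f y))}"

definition aut_top :: "('v \<Rightarrow> 'v \<Rightarrow> bool) \<Rightarrow> ('v \<Rightarrow> 'v) topology" where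
  "aut_top E = subtopology (product_topology (\<lambda>_. discrete_topology UNIV) UNIV) (aut E)"

definition aut_subgroup :: "('v \<Rightarrow> 'v \<Rightarrow> bool) \<Rightarrow> ('v \<Rightarrow> 'v) set \<Rightarrow> bool" where
  "aut_subgroup E H \<longleftrightarrow> H \<subseteq> aut E \<and> id \<in> H \<and>
     (\<forall>a\<in>H. \<forall>b\<in>H. a \<circ> b \<in> H) \<and> (\<forall>a\<in>H. inv a \<in> H)"

definition closed_subgroup :: "('v \<Rightarrow> 'v \<Rightarrow> bool) \<Rightarrow> ('v \<Rightarrow> 'v) set \<Rightarrow> bool" where
  "closed_subgroup E G \<longleftrightarrow> aut_subgroup E G \<and> closedin (aut_top E) G"

definition compact_open_subgroup ::
  "('v \<Rightarrow> 'v \<Rightarrow> bool) \<Rightarrow> ('v \<Rightarrow> 'v) set \<Rightarrow> ('v \<Rightarrow> 'v) set \<Rightarrow> bool" where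
  "compact_open_subgroup E G U \<longleftrightarrow> U \<subseteq> G \<and> aut_subgroup E U \<and>
     compactin (aut_top E) U \<and> openin (subtopology (aut_top E) G) U"

definition conj_set :: "('v \<Rightarrow> 'v) \<Rightarrow> ('v \<Rightarrow> 'v) set \<Rightarrow> ('v \<Rightarrow> 'v) set" where
  "conj_set g U = (\<lambda>u. g \<circ> u \<circ> inv g) ` U"

definition sg_index :: "('v \<Rightarrow> 'v) set \<Rightarrow> ('v \<Rightarrow> 'v) set \<Rightarrow> nat" where
  "sg_index A B = card ((\<lambda>a. (\<lambda>b. a \<circ> b) ` B) ` A)"

text \<open>For a t.d.l.c. group with compact open subgroup U,
  Delta(g) = [U : U \<inter> gUg^-1] / [gUg^-1 : U \<inter> gUg^-1].\<close>
definition modular_fn :: "('v \<Rightarrow> 'v \<Rightarrow> bool) \<Rightarrow> ('v \<Rightarrow> 'v) set \<Rightarrow> ('v \<Rightarrow> 'v) \<Rightarrow> real" where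
  "modular_fn E G g =
     (let U = (SOME U. compact_open_subgroup E G U) in
        real (sg_index U (U \<inter> conj_set g U)) /
        real (sg_index (conj_set g U) (U \<inter> conj_set g U)))"

definition G0 :: "('v \<Rightarrow> 'v \<Rightarrow> bool) \<Rightarrow> ('v \<Rightarrow> 'v) set \<Rightarrow> ('v \<Rightarrow> 'v) set" where
  "G0 E G = {g \<in> G. modular_fn E G g = 1}"

definition ray :: "('v \<Rightarrow> 'v \<Rightarrow> bool) \<Rightarrow> (nat \<Rightarrow> 'v) \<Rightarrow> bool" where
  "ray E r \<longleftrightarrow> inj r \<and> (\<forall>n. E (r n) (r (Suc n)))"

definition ray_equiv :: "(nat \<Rightarrow> 'v) \<Rightarrow> (nat \<Rightarrow> 'v) \<Rightarrow> bool" where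
  "ray_equiv r s \<longleftrightarrow> (\<exists>i j. \<forall>n. r (n + i) = s (n + j))"

definition fixes_end :: "('v \<Rightarrow> 'v) \<Rightarrow> (nat \<Rightarrow> 'v) \<Rightarrow> bool" where
  "fixes_end g r \<longleftrightarrow> ray_equiv (g \<circ> r) r"

definition end_stab :: "('v \<Rightarrow> 'v) set \<Rightarrow> (nat \<Rightarrow> 'v) \<Rightarrow> ('v \<Rightarrow> 'v) set" where
  "end_stab G r = {h \<in> G. fixes_end h r}"

definition hyperbolic :: "('v \<Rightarrow> 'v \<Rightarrow> bool) \<Rightarrow> ('v \<Rightarrow> 'v) \<Rightarrow> bool" where
  "hyperbolic E g \<longleftrightarrow> g \<in> aut E \<and>
     (\<forall>x. g x \<noteq> x) \<and>
     (\<forall>x y. E x y \<longrightarrow> \<not> (g x = y \<and> g y = x)) \<and>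
     (\<exists>r1 r2. ray E r1 \<and> ray E r2 \<and> \<not> ray_equiv r1 r2 \<and> fixes_end g r1 \<and> fixes_end g r2 \<and>
        (\<forall>r. ray E r \<and> fixes_end g r \<longrightarrow> ray_equiv r r1 \<or> ray_equiv r r2))"

end

theory Submission
  imports Defs
begin

text \<open>Open subgroups of \<open>G\<close> are those containing the pointwise stabiliser of a finite set of
  vertices, and in a locally finite tree such stabilisers are compact. The modular function can
  therefore be computed on any subgroup \<open>V\<close> with finite orbits containing such a stabiliser, as
  \<open>[V : V \<inter> gVg\<inverse>] / [gVg\<inverse> : V \<inter> gVg\<inverse>]\<close>.

  Replacing \<open>g\<close> by its inverse if necessary, \<open>g\<close> translates a tail \<open>P\<close> of a ray towards a
  fixed end whose stabiliser is open, so the pointwise stabiliser \<open>W\<close> of \<open>P\<close> is compact open,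
  and \<open>gWg\<inverse>\<close>, the pointwise stabiliser of \<open>gP \<subseteq> P\<close>, contains \<open>W\<close>. If \<open>g \<in> G\<^sub>0\<close> then
  \<open>[gWg\<inverse> : W] = 1\<close>, so \<open>g\<close> normalises \<open>W\<close>; then \<open>W\<close> fixes every \<open>g\<^sup>-\<^sup>n P\<close>, and these contain a
  ray towards the other fixed end, whose stabiliser therefore contains \<open>W\<close> and is open. If both
  end stabilisers are open, the pointwise stabiliser of the axis of \<open>g\<close> is compact open and
  normalised by \<open>g\<close>; and a normalised compact open subgroup forces \<open>g \<in> G\<^sub>0\<close>.\<close>

lemma aut_bij: "f \<in> aut E \<Longrightarrow> bij f"
  by (simp add: aut_def)

lemma aut_edge_iff: "f \<in> aut E \<Longrightarrow> E (f x) (f y) \<longleftrightarrow> E x y"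
  by (simp add: aut_def)

lemma aut_apply_inv [simp]: "f \<in> aut E \<Longrightarrow> f (inv f x) = x"
  by (simp add: aut_bij bij_is_surj surj_f_inv_f)

lemma aut_inv_apply [simp]: "f \<in> aut E \<Longrightarrow> inv f (f x) = x"
  by (simp add: aut_bij bij_is_inj)

lemma aut_inj_iff: "f \<in> aut E \<Longrightarrow> f x = f y \<longleftrightarrow> x = y"
  using aut_bij bij_is_inj inj_eq by metis

lemma aut_inv:
  assumes f: "f \<in> aut E"
  shows "inv f \<in> aut E"
proof -
  have "E (inv f x) (inv f y) \<longleftrightarrow> E x y" for x y
    using aut_edge_iff[OF f, of "inv f x" "inv f y", symmetric] f by simp
  then show ?thesis
    unfolding aut_def using bij_imp_bij_inv[OF aut_bij[OF f]] by simp
qed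

lemma aut_comp: "f \<in> aut E \<Longrightarrow> g \<in> aut E \<Longrightarrow> f \<circ> g \<in> aut E"
  unfolding aut_def by (auto intro: bij_comp)

lemma aut_id: "id \<in> aut E"
  unfolding aut_def by auto

lemma aut_funpow: "f \<in> aut E \<Longrightarrow> f ^^ n \<in> aut E"
  by (induction n) (simp_all add: aut_id aut_comp)

lemma aut_inv_inv: "f \<in> aut E \<Longrightarrow> inv (inv f) = f"
  by (simp add: aut_bij inv_inv_eq)

lemma aut_funpow_apply_inv [simp]: "f \<in> aut E \<Longrightarrow> (f ^^ n) ((inv f ^^ n) x) = x"
  using fn_o_inv_fn_is_id[OF aut_bij, of f E n] by (simp add: fun_eq_iff)

lemma aut_subgroup_aut: "aut_subgroup E G \<Longrightarrow> h \<in> G \<Longrightarrow> h \<in> aut E"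
  unfolding aut_subgroup_def by auto

lemma aut_subgroup_comp: "aut_subgroup E G \<Longrightarrow> a \<in> G \<Longrightarrow> b \<in> G \<Longrightarrow> a \<circ> b \<in> G"
  unfolding aut_subgroup_def by auto

lemma aut_subgroup_inv: "aut_subgroup E G \<Longrightarrow> a \<in> G \<Longrightarrow> inv a \<in> G"
  unfolding aut_subgroup_def by auto

lemma aut_subgroup_id: "aut_subgroup E G \<Longrightarrow> id \<in> G"
  unfolding aut_subgroup_def by auto

lemma aut_subgroup_funpow: "aut_subgroup E G \<Longrightarrow> a \<in> G \<Longrightarrow> a ^^ n \<in> G"
  by (induction n) (simp_all add: aut_subgroup_id aut_subgroup_comp)

lemma aut_subgroup_Int: "aut_subgroup E A \<Longrightarrow> aut_subgroup E B \<Longrightarrow> aut_subgroup E (A \<inter> B)"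
  unfolding aut_subgroup_def by auto

lemma closed_subgroup_subgroup: "closed_subgroup E G \<Longrightarrow> aut_subgroup E G"
  by (simp add: closed_subgroup_def)

definition pointwise_stab :: "('v \<Rightarrow> 'v) set \<Rightarrow> 'v set \<Rightarrow> ('v \<Rightarrow> 'v) set" where
  "pointwise_stab G S = {h \<in> G. \<forall>y\<in>S. h y = y}"

lemma pointwise_stab_antimono: "S \<subseteq> T \<Longrightarrow> pointwise_stab G T \<subseteq> pointwise_stab G S"
  by (auto simp: pointwise_stab_def)

lemma pointwise_stab_Un: "pointwise_stab G (S \<union> T) = pointwise_stab G S \<inter> pointwise_stab G T"
  by (auto simp: pointwise_stab_def)

lemma aut_subgroup_pointwise_stab:
  assumes G: "aut_subgroup E G"
  shows "aut_subgroup E (pointwise_stab G S)"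
  unfolding aut_subgroup_def
proof (intro conjI ballI)
  show "pointwise_stab G S \<subseteq> aut E" "id \<in> pointwise_stab G S"
    using aut_subgroup_aut[OF G] aut_subgroup_id[OF G] by (auto simp: pointwise_stab_def)
next
  fix a b assume "a \<in> pointwise_stab G S" "b \<in> pointwise_stab G S"
  then show "a \<circ> b \<in> pointwise_stab G S"
    using aut_subgroup_comp[OF G] by (simp add: pointwise_stab_def)
next
  fix a assume a: "a \<in> pointwise_stab G S"
  then have "a \<in> aut E" using aut_subgroup_aut[OF G] by (simp add: pointwise_stab_def)
  then have "inv a y = y" if "y \<in> S" for y
    using a that aut_inv_apply[of a E y] by (simp add: pointwise_stab_def)
  then show "inv a \<in> pointwise_stab G S"
    using a aut_subgroup_inv[OF G] by (simp add: pointwise_stab_def)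
qed

section \<open>The topology of pointwise convergence\<close>

abbreviation pointwise_top :: "('v \<Rightarrow> 'v) topology" where
  "pointwise_top \<equiv> product_topology (\<lambda>_. discrete_topology UNIV) UNIV"

lemma openin_pointwise_agree:
  fixes f0 :: "'v \<Rightarrow> 'v"
  assumes "finite F"
  shows "openin pointwise_top {f. \<forall>y\<in>F. f y = f0 y}"
proof -
  have "{f. \<forall>y\<in>F. f y = f0 y} = PiE UNIV (\<lambda>y. if y \<in> F then {f0 y} else UNIV)"
    by (auto simp: PiE_def Pi_def extensional_def)
  moreover have "finite {y. (if y \<in> F then {f0 y} else UNIV) \<noteq> (UNIV :: 'v set)}"
    by (rule finite_subset[OF _ assms]) auto
  ultimately show ?thesis
    by (simp add: openin_PiE_gen)
qed

lemma closedin_pointwise_topI: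
  assumes "\<And>f. (\<And>F. finite F \<Longrightarrow> \<exists>k\<in>K. \<forall>y\<in>F. k y = f y) \<Longrightarrow> f \<in> K"
  shows "closedin pointwise_top K"
  unfolding closedin_def
proof (intro conjI)
  show "openin pointwise_top (topspace pointwise_top - K)"
  proof (subst openin_subopen, intro ballI)
    fix f assume "f \<in> topspace pointwise_top - K"
    then obtain F where F: "finite F" "\<forall>k\<in>K. \<exists>y\<in>F. k y \<noteq> f y"
      using assms[of f] by blast
    then show "\<exists>T. openin pointwise_top T \<and> f \<in> T \<and> T \<subseteq> topspace pointwise_top - K"
      by (intro exI[of _ "{f'. \<forall>y\<in>F. f' y = f y}"]) (force simp: openin_pointwise_agree)
  qed
qed simp

lemma subtopology_aut_top:
  "G \<subseteq> aut E \<Longrightarrow> subtopology (aut_top E) G = subtopology pointwise_top G"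
  unfolding aut_top_def by (simp add: subtopology_subtopology Int_absorb1)

lemma pointwise_stab_subset_if_openin:
  fixes G H :: "('v \<Rightarrow> 'v) set"
  assumes "openin (subtopology pointwise_top G) H" and "id \<in> H"
  shows "\<exists>F. finite F \<and> pointwise_stab G F \<subseteq> H"
proof -
  obtain V where V: "openin pointwise_top V" "H = V \<inter> G"
    using assms(1) by (auto simp: openin_subtopology)
  then have "id \<in> V" using assms(2) by blast
  then obtain U :: "'v \<Rightarrow> 'v set" where
    U: "finite {y. U y \<noteq> UNIV}" "id \<in> PiE UNIV U" "PiE UNIV U \<subseteq> V"
    using V(1) unfolding openin_product_topology_alt by auto
  have "pointwise_stab G {y. U y \<noteq> UNIV} \<subseteq> H"
  proof
    fix h assume h: "h \<in> pointwise_stab G {y. U y \<noteq> UNIV}"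
    have "h y \<in> U y" for y
      using h U(2) by (cases "U y = UNIV") (auto simp: pointwise_stab_def PiE_def)
    then have "h \<in> PiE UNIV U" by (simp add: PiE_def)
    then show "h \<in> H" using U(3) V(2) h by (auto simp: pointwise_stab_def)
  qed
  then show ?thesis using U(1) by blast
qed

lemma openin_if_pointwise_stab_subset:
  assumes G: "aut_subgroup E G" and H: "aut_subgroup E H" "H \<subseteq> G"
    and F: "finite F" "pointwise_stab G F \<subseteq> H"
  shows "openin (subtopology pointwise_top G) H"
proof (subst openin_subopen, intro ballI)
  fix h assume h: "h \<in> H"
  then have ha: "h \<in> aut E" and hG: "h \<in> G" using H aut_subgroup_aut[OF H(1)] by auto
  define T where "T = {f. \<forall>y\<in>F. f y = h y} \<inter> G"
  have "f \<in> H" if f: "f \<in> T" for f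
  proof -
    have "inv h \<circ> f \<in> pointwise_stab G F"
      using f ha aut_subgroup_comp[OF G aut_subgroup_inv[OF G hG]]
      by (auto simp: T_def pointwise_stab_def)
    then have "h \<circ> (inv h \<circ> f) \<in> H"
      using F(2) h aut_subgroup_comp[OF H(1)] by blast
    moreover have "h \<circ> (inv h \<circ> f) = f" using ha by (simp add: fun_eq_iff)
    ultimately show ?thesis by simp
  qed
  moreover have "openin (subtopology pointwise_top G) T"
    unfolding T_def using openin_pointwise_agree[OF F(1)] by (auto simp: openin_subtopology)
  ultimately show "\<exists>T. openin (subtopology pointwise_top G) T \<and> h \<in> T \<and> T \<subseteq> H"
    using hG by (auto simp: T_def)
qed

lemma openin_subgroup_iff:
  fixes E :: "'v \<Rightarrow> 'v \<Rightarrow> bool"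
  assumes G: "aut_subgroup E G" and H: "aut_subgroup E H" "H \<subseteq> G"
  shows "openin (subtopology (aut_top E) G) H \<longleftrightarrow> (\<exists>F. finite F \<and> pointwise_stab G F \<subseteq> H)"
proof -
  have "G \<subseteq> aut E" using aut_subgroup_aut[OF G] by blast
  then show ?thesis
    using pointwise_stab_subset_if_openin[OF _ aut_subgroup_id[OF H(1)]]
      openin_if_pointwise_stab_subset[OF G H] by (auto simp: subtopology_aut_top)
qed

fun graph_ball :: "('v \<Rightarrow> 'v \<Rightarrow> bool) \<Rightarrow> nat \<Rightarrow> 'v \<Rightarrow> 'v set" where
  "graph_ball E 0 x = {x}"
| "graph_ball E (Suc n) x = graph_ball E n x \<union> {z. \<exists>y\<in>graph_ball E n x. E y z}"

lemma finite_graph_ball: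
  assumes "\<And>y. finite {z. E y z}"
  shows "finite (graph_ball E n x)"
proof (induction n)
  case (Suc n)
  have "{z. \<exists>y\<in>graph_ball E n x. E y z} = (\<Union>y\<in>graph_ball E n x. {z. E y z})" by auto
  then show ?case using Suc assms by simp
qed simp

lemma aut_graph_ball:
  assumes f: "f \<in> aut E"
  shows "y \<in> graph_ball E n x \<Longrightarrow> f y \<in> graph_ball E n (f x)"
proof (induction n arbitrary: y)
  case (Suc n)
  then consider "y \<in> graph_ball E n x" | w where "w \<in> graph_ball E n x" "E w y" by auto
  then show ?case
  proof cases
    case (2 w)
    then have "E (f w) (f y)" using aut_edge_iff[OF f] by simp
    then show ?thesis using Suc.IH[OF 2(1)] by auto
  qed (use Suc.IH in auto)
qed simp

lemma graph_ball_exhaust: "(x, y) \<in> {(a, b). E a b}\<^sup>* \<Longrightarrow> \<exists>n. y \<in> graph_ball E n x"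
proof (induction rule: rtrancl_induct)
  case base
  show ?case by (rule exI[of _ 0]) simp
next
  case (step y z)
  then obtain n where "y \<in> graph_ball E n x" by blast
  then have "z \<in> graph_ball E (Suc n) x" using step by auto
  then show ?case by blast
qed

lemma locally_finite_tree_graph_ball:
  assumes "locally_finite_tree E"
  shows "finite (graph_ball E n x)" and "\<exists>m. y \<in> graph_ball E m x"
proof -
  show "finite (graph_ball E n x)"
    using assms by (intro finite_graph_ball) (simp add: locally_finite_tree_def)
  have "(x, y) \<in> {(a, b). E a b}\<^sup>*"
    using assms by (simp add: locally_finite_tree_def)
  then show "\<exists>m. y \<in> graph_ball E m x" by (rule graph_ball_exhaust)
qed

lemma closedin_aut_fixing:
  assumes T: "locally_finite_tree E" and x: "x \<in> S"
  shows "closedin pointwise_top {f \<in> aut E. \<forall>y\<in>S. f y = y}"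
proof (rule closedin_pointwise_topI)
  fix f
  assume approx: "\<And>F. finite F \<Longrightarrow> \<exists>k\<in>{f \<in> aut E. \<forall>y\<in>S. f y = y}. \<forall>y\<in>F. k y = f y"
  have approx_pair: "\<exists>k\<in>aut E. k a = f a \<and> k b = f b" for a b
    using approx[of "{a, b}"] by auto
  have fixing: "f y = y" if "y \<in> S" for y
    using approx[of "{y}"] that by auto
  have edge: "E (f a) (f b) \<longleftrightarrow> E a b" for a b
  proof -
    obtain k where "k \<in> aut E" "k a = f a" "k b = f b" using approx_pair by blast
    then show ?thesis using aut_edge_iff[of k E a b] by simp
  qed
  have "inj f"
  proof (rule injI)
    fix a b assume ab: "f a = f b"
    obtain k where "k \<in> aut E" "k a = f a" "k b = f b" using approx_pair by blast
    then show "a = b" using ab aut_inj_iff[of k E a b] by simp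
  qed
  \<comment> \<open>Only surjectivity needs local finiteness: an approximant on a finite ball around the
    fixed vertex \<open>x\<close> maps that ball onto itself.\<close>
  moreover have "z \<in> range f" for z
  proof -
    obtain n where n: "z \<in> graph_ball E n x"
      using locally_finite_tree_graph_ball(2)[OF T] by blast
    obtain k where k: "k \<in> aut E" "\<forall>y\<in>S. k y = y" "\<forall>y\<in>graph_ball E n x. k y = f y"
      using approx[OF locally_finite_tree_graph_ball(1)[OF T]] by blast
    have "inv k x = x" using aut_inv_apply[OF k(1), of x] k(2) x by simp
    then have "inv k z \<in> graph_ball E n x"
      using aut_graph_ball[OF aut_inv[OF k(1)] n] by simp
    then have "f (inv k z) = z" using k by force
    then show ?thesis by (metis rangeI)
  qed
  ultimately have "bij f" by (auto simp: bij_def)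
  then have "f \<in> aut E"
    unfolding aut_def using edge by simp
  then show "f \<in> {f \<in> aut E. \<forall>y\<in>S. f y = y}"
    using fixing by simp
qed

lemma compactin_pointwise_stab:
  assumes T: "locally_finite_tree E" and G: "closed_subgroup E G" and x: "x \<in> S"
  shows "compactin (aut_top E) (pointwise_stab G S)"
proof -
  obtain C where C: "closedin pointwise_top C" "G = C \<inter> aut E"
    using G unfolding closed_subgroup_def aut_top_def closedin_subtopology by auto
  define K where "K = {f \<in> aut E. \<forall>y\<in>S. f y = y}"
  define radius where "radius y = (SOME n. y \<in> graph_ball E n x)" for y
  have radius: "y \<in> graph_ball E (radius y) x" for y
    unfolding radius_def by (rule someI_ex) (rule locally_finite_tree_graph_ball(2)[OF T])
  have "K \<subseteq> PiE UNIV (\<lambda>y. graph_ball E (radius y) x)"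
    using aut_graph_ball[OF _ radius] x by (fastforce simp: K_def)
  moreover have "compactin pointwise_top (PiE UNIV (\<lambda>y. graph_ball E (radius y) x))"
    using locally_finite_tree_graph_ball(1)[OF T]
    by (subst compactin_PiE) (simp add: compactin_discrete_topology)
  ultimately have "compactin pointwise_top K"
    using closed_compactin closedin_aut_fixing[OF T x] unfolding K_def by blast
  then have "compactin pointwise_top (pointwise_stab G S)"
    using closed_Int_compactin[OF C(1)] C(2) by (simp add: pointwise_stab_def K_def Collect_conj_eq Int_assoc)
  then show ?thesis
    unfolding aut_top_def using C(2) by (auto simp: compactin_subtopology pointwise_stab_def)
qed

lemma compact_open_subgroup_pointwise_stab:
  assumes T: "locally_finite_tree E" and G: "closed_subgroup E G" and x: "x \<in> S"
    and F: "finite F" "pointwise_stab G F \<subseteq> pointwise_stab G S"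
  shows "compact_open_subgroup E G (pointwise_stab G S)"
  using compactin_pointwise_stab[OF T G x] F
    openin_subgroup_iff[OF closed_subgroup_subgroup[OF G]
      aut_subgroup_pointwise_stab[OF closed_subgroup_subgroup[OF G]]]
    aut_subgroup_pointwise_stab[OF closed_subgroup_subgroup[OF G]]
  unfolding compact_open_subgroup_def by (auto simp: pointwise_stab_def)

lemma ex_compact_open_subgroup:
  assumes "locally_finite_tree E" and "closed_subgroup E G"
  shows "\<exists>U. compact_open_subgroup E G U"
  using compact_open_subgroup_pointwise_stab[OF assms, of x "{x}"] by blast

lemma compactin_aut_top_finite_orbit:
  assumes "compactin (aut_top E) U"
  shows "finite ((\<lambda>h. h y) ` U)"
proof -
  have "continuous_map (aut_top E) (discrete_topology UNIV) (\<lambda>h. h y)"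
    unfolding aut_top_def
    by (intro continuous_map_from_subtopology continuous_map_product_projection) simp
  then have "compactin (discrete_topology UNIV) ((\<lambda>h. h y) ` U)"
    by (rule image_compactin[OF assms])
  then show ?thesis by (simp add: compactin_discrete_topology)
qed

section \<open>Cosets and indices\<close>

definition lcoset :: "('v \<Rightarrow> 'v) \<Rightarrow> ('v \<Rightarrow> 'v) set \<Rightarrow> ('v \<Rightarrow> 'v) set" where
  "lcoset a B = (\<lambda>b. a \<circ> b) ` B"

lemma sg_index_lcoset: "sg_index A B = card ((\<lambda>a. lcoset a B) ` A)"
  by (simp add: sg_index_def lcoset_def)

lemma lcoset_id [simp]: "lcoset id B = B"
  by (simp add: lcoset_def)

lemma lcoset_lcoset: "lcoset a (lcoset b B) = lcoset (a \<circ> b) B"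
  by (auto simp: lcoset_def image_image comp_assoc)

lemma lcoset_subgroup_self:
  assumes Y: "aut_subgroup E Y" and y: "y \<in> Y"
  shows "lcoset y Y = Y"
proof
  show "lcoset y Y \<subseteq> Y" using aut_subgroup_comp[OF Y y] by (auto simp: lcoset_def)
  show "Y \<subseteq> lcoset y Y"
  proof
    fix z assume z: "z \<in> Y"
    have "y \<circ> (inv y \<circ> z) = z"
      using aut_subgroup_aut[OF Y y] by (simp add: fun_eq_iff)
    moreover have "inv y \<circ> z \<in> Y" using aut_subgroup_comp[OF Y aut_subgroup_inv[OF Y y] z] .
    ultimately show "z \<in> lcoset y Y" unfolding lcoset_def by (metis image_eqI)
  qed
qed

lemma mem_lcoset_self: "aut_subgroup E Y \<Longrightarrow> a \<in> lcoset a Y"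
  unfolding lcoset_def by (rule image_eqI[of _ _ id]) (simp_all add: aut_subgroup_id)

lemma lcoset_eq_if_mem:
  assumes Y: "aut_subgroup E Y" and c: "c \<in> lcoset a Y"
  shows "lcoset c Y = lcoset a Y"
proof -
  obtain y where "y \<in> Y" "c = a \<circ> y" using c by (auto simp: lcoset_def)
  then show ?thesis
    using lcoset_lcoset[of a y Y] lcoset_subgroup_self[OF Y] by simp
qed

lemma lcoset_eq_iff:
  assumes Y: "aut_subgroup E Y" and a: "a \<in> aut E"
  shows "lcoset a Y = lcoset b Y \<longleftrightarrow> inv a \<circ> b \<in> Y"
proof
  assume "lcoset a Y = lcoset b Y"
  then have "b \<in> lcoset a Y" using mem_lcoset_self[OF Y] by simp
  then obtain y where "y \<in> Y" "b = a \<circ> y" by (auto simp: lcoset_def)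
  moreover have "inv a \<circ> (a \<circ> y) = y" using a by (simp add: fun_eq_iff)
  ultimately show "inv a \<circ> b \<in> Y" by simp
next
  assume "inv a \<circ> b \<in> Y"
  moreover have "a \<circ> (inv a \<circ> b) = b" using a by (simp add: fun_eq_iff)
  ultimately have "b \<in> lcoset a Y" unfolding lcoset_def by (metis image_eqI)
  then show "lcoset a Y = lcoset b Y" using lcoset_eq_if_mem[OF Y] by simp
qed

lemma inj_lcoset:
  assumes a: "a \<in> aut E"
  shows "inj (lcoset a)"
proof (rule injI)
  fix P Q assume "lcoset a P = lcoset a Q"
  then have "lcoset (inv a) (lcoset a P) = lcoset (inv a) (lcoset a Q)" by simp
  moreover have "inv a \<circ> a = id" using a by (simp add: fun_eq_iff)
  ultimately show "P = Q" by (simp add: lcoset_lcoset)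
qed

lemma sg_index_mult:
  assumes X: "aut_subgroup E X" and Y: "aut_subgroup E Y" and Z: "aut_subgroup E Z"
    and ZY: "Z \<subseteq> Y" and YX: "Y \<subseteq> X"
    and fin_XY: "finite ((\<lambda>a. lcoset a Y) ` X)" and fin_YZ: "finite ((\<lambda>a. lcoset a Z) ` Y)"
  shows "sg_index X Z = sg_index X Y * sg_index Y Z"
proof -
  define fibre where "fibre C = (\<lambda>x. lcoset x Z) ` C" for C
  have fibre_lcoset: "fibre (lcoset x Y) = lcoset x ` ((\<lambda>a. lcoset a Z) ` Y)" for x
    by (auto simp: fibre_def lcoset_def image_image comp_assoc)
  have cover: "(\<lambda>a. lcoset a Z) ` X = (\<Union>C\<in>(\<lambda>a. lcoset a Y) ` X. fibre C)"
  proof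
    show "(\<lambda>a. lcoset a Z) ` X \<subseteq> (\<Union>C\<in>(\<lambda>a. lcoset a Y) ` X. fibre C)"
      using mem_lcoset_self[OF Y] by (force simp: fibre_def)
    show "(\<Union>C\<in>(\<lambda>a. lcoset a Y) ` X. fibre C) \<subseteq> (\<lambda>a. lcoset a Z) ` X"
      using YX aut_subgroup_comp[OF X] by (force simp: fibre_def lcoset_def)
  qed
  have card_fibre: "card (fibre C) = sg_index Y Z" if C: "C \<in> (\<lambda>a. lcoset a Y) ` X" for C
  proof -
    obtain x where "x \<in> X" "C = lcoset x Y" using C by blast
    then show ?thesis
      using inj_lcoset[OF aut_subgroup_aut[OF X]] fibre_lcoset
      by (simp add: sg_index_lcoset card_image inj_on_subset[OF _ subset_UNIV])
  qed
  have disjoint: "fibre C \<inter> fibre C' = {}"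
    if "C \<in> (\<lambda>a. lcoset a Y) ` X" "C' \<in> (\<lambda>a. lcoset a Y) ` X" "C \<noteq> C'" for C C'
  proof (rule ccontr)
    assume "fibre C \<inter> fibre C' \<noteq> {}"
    then obtain x x' where x: "x \<in> C" "x' \<in> C'" "lcoset x Z = lcoset x' Z"
      by (auto simp: fibre_def)
    then have "x' \<in> lcoset x Y" using mem_lcoset_self[OF Z, of x'] ZY by (auto simp: lcoset_def)
    then have "lcoset x' Y = lcoset x Y" by (rule lcoset_eq_if_mem[OF Y])
    moreover have "lcoset x Y = C" "lcoset x' Y = C'"
      using that x lcoset_eq_if_mem[OF Y] by auto
    ultimately show False using that(3) by simp
  qed
  have "sg_index X Z = card (\<Union>C\<in>(\<lambda>a. lcoset a Y) ` X. fibre C)"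
    by (simp add: sg_index_lcoset cover)
  also have "\<dots> = (\<Sum>C\<in>(\<lambda>a. lcoset a Y) ` X. card (fibre C))"
    using fin_XY fin_YZ disjoint by (intro card_UN_disjoint) (auto simp: fibre_lcoset)
  also have "\<dots> = sg_index X Y * sg_index Y Z"
    by (simp add: card_fibre sg_index_lcoset)
  finally show ?thesis .
qed

lemma sg_index_pos: "aut_subgroup E X \<Longrightarrow> finite ((\<lambda>a. lcoset a Y) ` X) \<Longrightarrow> sg_index X Y > 0"
  using aut_subgroup_id by (fastforce simp: sg_index_lcoset card_gt_0_iff)

lemma sg_index_self: "aut_subgroup E X \<Longrightarrow> sg_index X X = 1"
proof -
  assume X: "aut_subgroup E X"
  then have "(\<lambda>a. lcoset a X) ` X = {X}"
    using lcoset_subgroup_self[OF X] aut_subgroup_id[OF X] by auto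
  then show ?thesis by (simp add: sg_index_lcoset)
qed

lemma sg_index_eq_1_imp_eq:
  assumes X: "aut_subgroup E X" and Y: "aut_subgroup E Y" and YX: "Y \<subseteq> X"
    and index: "sg_index X Y = 1"
  shows "X = Y"
proof -
  obtain C where C: "(\<lambda>a. lcoset a Y) ` X = {C}"
    using index by (auto simp: sg_index_lcoset card_1_singleton_iff)
  have "lcoset b Y = Y" if "b \<in> X" for b
    using C that aut_subgroup_id[OF X] by (metis imageI lcoset_id singletonD)
  then have "X \<subseteq> Y" using mem_lcoset_self[OF Y] by blast
  then show ?thesis using YX by blast
qed

lemma finite_image_factor:
  assumes "finite (f ` A)" and "\<And>x y. x \<in> A \<Longrightarrow> y \<in> A \<Longrightarrow> f x = f y \<Longrightarrow> g x = g y"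
  shows "finite (g ` A)"
proof -
  have "g x \<in> (g \<circ> inv_into A f) ` (f ` A)" if x: "x \<in> A" for x
  proof (rule image_eqI)
    show "f x \<in> f ` A" using x by (rule imageI)
    have "inv_into A f (f x) \<in> A" "f (inv_into A f (f x)) = f x"
      using x by (simp_all add: inv_into_into f_inv_into_f)
    then show "g x = (g \<circ> inv_into A f) (f x)" using assms(2)[OF x] by simp
  qed
  then have "g ` A \<subseteq> (g \<circ> inv_into A f) ` (f ` A)" by blast
  then show ?thesis using assms(1) finite_subset by blast
qed

section \<open>The modular function\<close>

text \<open>Finite orbits stand in for compactness here: this is all the index computations need,
  and unlike compactness it is evidently preserved by intersections and conjugation.\<close>

definition bounded_open_subgroup ::
  "('v \<Rightarrow> 'v \<Rightarrow> bool) \<Rightarrow> ('v \<Rightarrow> 'v) set \<Rightarrow> ('v \<Rightarrow> 'v) set \<Rightarrow> bool" where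
  "bounded_open_subgroup E G A \<longleftrightarrow> aut_subgroup E A \<and> A \<subseteq> G \<and>
     (\<forall>y. finite ((\<lambda>a. a y) ` A)) \<and> (\<exists>F. finite F \<and> pointwise_stab G F \<subseteq> A)"

lemma bounded_open_subgroupD:
  assumes "bounded_open_subgroup E G A"
  shows "aut_subgroup E A" "A \<subseteq> G" "finite ((\<lambda>a. a y) ` A)"
    and "\<exists>F. finite F \<and> pointwise_stab G F \<subseteq> A"
  using assms by (auto simp: bounded_open_subgroup_def)

lemma finite_lcosets_Int:
  fixes E :: "'v \<Rightarrow> 'v \<Rightarrow> bool"
  assumes A: "bounded_open_subgroup E G A" and B: "bounded_open_subgroup E G B"
  shows "finite ((\<lambda>a. lcoset a (A \<inter> B)) ` A)"
proof -
  obtain F where F: "finite F" "pointwise_stab G F \<subseteq> B"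
    using bounded_open_subgroupD(4)[OF B] by blast
  have AB: "aut_subgroup E (A \<inter> B)"
    using aut_subgroup_Int bounded_open_subgroupD(1) A B by blast
  have "finite ((\<lambda>a. restrict a F) ` A)"
  proof (rule finite_subset)
    show "(\<lambda>a. restrict a F) ` A \<subseteq> PiE F (\<lambda>y. (\<lambda>a. a y) ` A)" by auto
    show "finite (PiE F (\<lambda>y. (\<lambda>a. a y) ` A))"
      using F(1) bounded_open_subgroupD(3)[OF A] by (simp add: finite_PiE)
  qed
  moreover have "lcoset a (A \<inter> B) = lcoset a' (A \<inter> B)"
    if a: "a \<in> A" "a' \<in> A" and eq: "restrict a F = restrict a' F" for a a'
  proof -
    have aut: "a \<in> aut E" using aut_subgroup_aut bounded_open_subgroupD(1)[OF A] a(1) by blast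
    have "inv a \<circ> a' \<in> A"
      using bounded_open_subgroupD(1)[OF A] a aut_subgroup_comp aut_subgroup_inv by blast
    moreover have "a' y = a y" if "y \<in> F" for y using eq that by (metis restrict_apply')
    then have "inv a \<circ> a' \<in> pointwise_stab G F"
      using calculation bounded_open_subgroupD(2)[OF A] aut by (auto simp: pointwise_stab_def)
    ultimately show ?thesis using F(2) lcoset_eq_iff[OF AB aut] by blast
  qed
  ultimately show ?thesis by (rule finite_image_factor)
qed

lemma bounded_open_subgroup_Int:
  assumes A: "bounded_open_subgroup E G A" and B: "bounded_open_subgroup E G B"
  shows "bounded_open_subgroup E G (A \<inter> B)"
proof -
  obtain F F' where "finite F" "pointwise_stab G F \<subseteq> A" "finite F'" "pointwise_stab G F' \<subseteq> B"
    using bounded_open_subgroupD(4) A B by metis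
  then have "finite (F \<union> F') \<and> pointwise_stab G (F \<union> F') \<subseteq> A \<inter> B"
    by (auto simp: pointwise_stab_Un)
  moreover have "finite ((\<lambda>a. a y) ` (A \<inter> B))" for y
    using bounded_open_subgroupD(3)[OF A] by (rule finite_subset[rotated]) auto
  ultimately show ?thesis
    using A B aut_subgroup_Int by (auto simp: bounded_open_subgroup_def)
qed

lemma compact_open_imp_bounded_open_subgroup:
  fixes E :: "'v \<Rightarrow> 'v \<Rightarrow> bool"
  assumes G: "aut_subgroup E G" and U: "compact_open_subgroup E G U"
  shows "bounded_open_subgroup E G U"
proof -
  have U': "U \<subseteq> G" "aut_subgroup E U" "compactin (aut_top E) U"
    "openin (subtopology (aut_top E) G) U"
    using U by (simp_all add: compact_open_subgroup_def)
  then show ?thesis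
    unfolding bounded_open_subgroup_def openin_subgroup_iff[OF G U'(2,1)]
    using compactin_aut_top_finite_orbit[OF U'(3)] by blast
qed

lemma conj_set_conj_set:
  assumes "f \<in> aut E" "g \<in> aut E"
  shows "conj_set f (conj_set g A) = conj_set (f \<circ> g) A"
proof -
  have "inv (f \<circ> g) = inv g \<circ> inv f" using assms by (simp add: aut_bij o_inv_distrib)
  then show ?thesis unfolding conj_set_def image_image by (simp add: comp_assoc)
qed

lemma conj_set_id [simp]: "conj_set id A = A"
  by (simp add: conj_set_def)

lemma conj_set_inv_conj_set [simp]:
  assumes g: "g \<in> aut E"
  shows "conj_set (inv g) (conj_set g A) = A" and "conj_set g (conj_set (inv g) A) = A"
proof -
  have "inv g \<circ> g = id" "g \<circ> inv g = id" using g by (simp_all add: fun_eq_iff)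
  then show "conj_set (inv g) (conj_set g A) = A" "conj_set g (conj_set (inv g) A) = A"
    using conj_set_conj_set[OF aut_inv[OF g] g] conj_set_conj_set[OF g aut_inv[OF g]] by simp_all
qed

lemma inj_conj_set: "g \<in> aut E \<Longrightarrow> inj (conj_set g)"
  by (metis conj_set_inv_conj_set(1) injI)

lemma conj_set_Int:
  assumes g: "g \<in> aut E"
  shows "conj_set g (A \<inter> B) = conj_set g A \<inter> conj_set g B"
proof -
  have "inj (\<lambda>u. g \<circ> u \<circ> inv g)"
  proof (rule injI)
    fix u v assume "g \<circ> u \<circ> inv g = g \<circ> v \<circ> inv g"
    then have "inv g \<circ> (g \<circ> u \<circ> inv g) \<circ> g = inv g \<circ> (g \<circ> v \<circ> inv g) \<circ> g" by simp
    then show "u = v" using g by (simp add: fun_eq_iff)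
  qed
  then show ?thesis unfolding conj_set_def by (rule image_Int)
qed

lemma conj_set_lcoset:
  assumes g: "g \<in> aut E"
  shows "conj_set g (lcoset x Y) = lcoset (g \<circ> x \<circ> inv g) (conj_set g Y)"
proof -
  have "g \<circ> (x \<circ> y) \<circ> inv g = (g \<circ> x \<circ> inv g) \<circ> (g \<circ> y \<circ> inv g)" for y
    using g by (simp add: fun_eq_iff)
  then show ?thesis unfolding conj_set_def lcoset_def image_image by simp
qed

lemma sg_index_conj_set:
  assumes g: "g \<in> aut E"
  shows "sg_index (conj_set g X) (conj_set g Y) = sg_index X Y"
proof -
  have "(\<lambda>a. lcoset a (conj_set g Y)) ` conj_set g X = conj_set g ` (\<lambda>a. lcoset a Y) ` X"
    unfolding conj_set_def[of g X] image_image conj_set_lcoset[OF g] ..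
  then show ?thesis
    unfolding sg_index_lcoset
    using card_image[OF inj_on_subset[OF inj_conj_set[OF g] subset_UNIV]] by simp
qed

lemma conj_set_subset_subgroup:
  assumes G: "aut_subgroup E G" and A: "A \<subseteq> G" and g: "g \<in> G"
  shows "conj_set g A \<subseteq> G"
  using A aut_subgroup_comp[OF G] aut_subgroup_inv[OF G g] g by (auto simp: conj_set_def)

lemma conj_set_pointwise_stab:
  assumes G: "aut_subgroup E G" and g: "g \<in> G"
  shows "conj_set g (pointwise_stab G S) = pointwise_stab G (g ` S)"
proof -
  have ga: "g \<in> aut E" using aut_subgroup_aut[OF G g] .
  have conj_in_G: "g \<circ> h \<circ> inv g \<in> G" "inv g \<circ> h \<circ> g \<in> G" if "h \<in> G" for h
    using aut_subgroup_comp[OF G] aut_subgroup_inv[OF G g] g that by simp_all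
  show ?thesis
  proof
    show "conj_set g (pointwise_stab G S) \<subseteq> pointwise_stab G (g ` S)"
      using conj_in_G ga by (auto simp: conj_set_def pointwise_stab_def)
    show "pointwise_stab G (g ` S) \<subseteq> conj_set g (pointwise_stab G S)"
    proof
      fix h assume h: "h \<in> pointwise_stab G (g ` S)"
      then have "inv g \<circ> h \<circ> g \<in> pointwise_stab G S"
        using conj_in_G ga by (auto simp: pointwise_stab_def)
      moreover have "h = g \<circ> (inv g \<circ> h \<circ> g) \<circ> inv g" using ga by (simp add: fun_eq_iff)
      ultimately show "h \<in> conj_set g (pointwise_stab G S)" unfolding conj_set_def by blast
    qed
  qed
qed

lemma aut_subgroup_conj_set:
  assumes A: "aut_subgroup E A" and g: "g \<in> aut E"
  shows "aut_subgroup E (conj_set g A)"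
  unfolding aut_subgroup_def
proof (intro conjI ballI)
  show "conj_set g A \<subseteq> aut E"
    using aut_comp[OF aut_comp[OF g aut_subgroup_aut[OF A]] aut_inv[OF g]]
    by (auto simp: conj_set_def)
  have "g \<circ> id \<circ> inv g = id" using g by (simp add: fun_eq_iff)
  then show "id \<in> conj_set g A"
    using aut_subgroup_id[OF A] unfolding conj_set_def by (metis image_eqI)
next
  fix a b assume "a \<in> conj_set g A" "b \<in> conj_set g A"
  then obtain u v where uv: "u \<in> A" "v \<in> A" "a = g \<circ> u \<circ> inv g" "b = g \<circ> v \<circ> inv g"
    by (auto simp: conj_set_def)
  then have "a \<circ> b = g \<circ> (u \<circ> v) \<circ> inv g" using g by (simp add: fun_eq_iff)
  then show "a \<circ> b \<in> conj_set g A"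
    using aut_subgroup_comp[OF A uv(1,2)] unfolding conj_set_def by (metis image_eqI)
next
  fix a assume "a \<in> conj_set g A"
  then obtain u where u: "u \<in> A" "a = g \<circ> u \<circ> inv g" by (auto simp: conj_set_def)
  have "(g \<circ> u \<circ> inv g) \<circ> (g \<circ> inv u \<circ> inv g) = id" "(g \<circ> inv u \<circ> inv g) \<circ> (g \<circ> u \<circ> inv g) = id"
    using g aut_subgroup_aut[OF A u(1)] by (simp_all add: fun_eq_iff)
  then have "inv a = g \<circ> inv u \<circ> inv g" unfolding u(2) by (rule inv_unique_comp)
  then show "inv a \<in> conj_set g A"
    using aut_subgroup_inv[OF A u(1)] unfolding conj_set_def by (metis image_eqI)
qed

lemma bounded_open_subgroup_conj_set:
  fixes E :: "'v \<Rightarrow> 'v \<Rightarrow> bool"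
  assumes G: "aut_subgroup E G" and A: "bounded_open_subgroup E G A" and g: "g \<in> G"
  shows "bounded_open_subgroup E G (conj_set g A)"
proof -
  have ga: "g \<in> aut E" using aut_subgroup_aut[OF G g] .
  obtain F where F: "finite F" "pointwise_stab G F \<subseteq> A"
    using bounded_open_subgroupD(4)[OF A] by blast
  have "pointwise_stab G (g ` F) \<subseteq> conj_set g A"
    using conj_set_pointwise_stab[OF G g, of F] F(2) by (auto simp: conj_set_def)
  moreover have "(\<lambda>a. a y) ` conj_set g A = g ` (\<lambda>a. a (inv g y)) ` A" for y
    by (auto simp: conj_set_def image_image)
  ultimately show ?thesis
    unfolding bounded_open_subgroup_def
    using aut_subgroup_conj_set[OF bounded_open_subgroupD(1)[OF A] ga]
      conj_set_subset_subgroup[OF G bounded_open_subgroupD(2)[OF A] g]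
      bounded_open_subgroupD(3)[OF A] F(1) by auto
qed

text \<open>Since \<open>sg_index\<close> is a cardinality, it is \<open>0\<close> for infinitely many cosets; for bounded open
  subgroups this junk case is excluded by \<open>finite_lcosets_Int\<close>.\<close>

definition index_ratio :: "('v \<Rightarrow> 'v) set \<Rightarrow> ('v \<Rightarrow> 'v) set \<Rightarrow> real" where
  "index_ratio A B = real (sg_index A (A \<inter> B)) / real (sg_index B (A \<inter> B))"

lemma index_ratio_via_subgroup:
  fixes E :: "'v \<Rightarrow> 'v \<Rightarrow> bool"
  assumes A: "bounded_open_subgroup E G A" and B: "bounded_open_subgroup E G B"
    and W: "bounded_open_subgroup E G W" and WAB: "W \<subseteq> A \<inter> B"
  shows "index_ratio A B = real (sg_index A W) / real (sg_index B W)"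
    and "sg_index B W > 0"
proof -
  have AB: "bounded_open_subgroup E G (A \<inter> B)" by (rule bounded_open_subgroup_Int[OF A B])
  note subgroup = bounded_open_subgroupD(1)
  have fin_W: "finite ((\<lambda>a. lcoset a W) ` (A \<inter> B))"
  proof -
    have "A \<inter> B \<inter> W = W" using WAB by blast
    then show ?thesis using finite_lcosets_Int[OF AB W] by simp
  qed
  have fin_B: "finite ((\<lambda>a. lcoset a (A \<inter> B)) ` B)"
    using finite_lcosets_Int[OF B A] by (simp add: Int_commute)
  have A_W: "sg_index A W = sg_index A (A \<inter> B) * sg_index (A \<inter> B) W"
    using finite_lcosets_Int[OF A B] fin_W WAB
    by (intro sg_index_mult[OF subgroup[OF A] subgroup[OF AB] subgroup[OF W]]) auto
  have B_W: "sg_index B W = sg_index B (A \<inter> B) * sg_index (A \<inter> B) W"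
    using fin_B fin_W WAB
    by (intro sg_index_mult[OF subgroup[OF B] subgroup[OF AB] subgroup[OF W]]) auto
  have pos: "sg_index (A \<inter> B) W > 0" "sg_index B (A \<inter> B) > 0"
    using sg_index_pos[OF subgroup[OF AB] fin_W] sg_index_pos[OF subgroup[OF B] fin_B] by auto
  show "index_ratio A B = real (sg_index A W) / real (sg_index B W)"
    unfolding index_ratio_def A_W B_W using pos by simp
  show "sg_index B W > 0" unfolding B_W using pos by simp
qed

lemma index_ratio_trans:
  fixes E :: "'v \<Rightarrow> 'v \<Rightarrow> bool"
  assumes A: "bounded_open_subgroup E G A" and B: "bounded_open_subgroup E G B"
    and C: "bounded_open_subgroup E G C"
  shows "index_ratio A B * index_ratio B C = index_ratio A C"
proof -
  define W where "W = A \<inter> B \<inter> C"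
  have W: "bounded_open_subgroup E G W"
    unfolding W_def by (intro bounded_open_subgroup_Int A B C)
  have "W \<subseteq> A \<inter> B" "W \<subseteq> B \<inter> C" "W \<subseteq> A \<inter> C" by (auto simp: W_def)
  then show ?thesis
    using index_ratio_via_subgroup[OF A B W] index_ratio_via_subgroup[OF B C W]
      index_ratio_via_subgroup[OF A C W] by simp
qed

lemma index_ratio_self: "aut_subgroup E A \<Longrightarrow> index_ratio A A = 1"
  by (simp add: index_ratio_def sg_index_self)

lemma index_ratio_conj_set:
  "g \<in> aut E \<Longrightarrow> index_ratio (conj_set g A) (conj_set g B) = index_ratio A B"
  by (simp add: index_ratio_def conj_set_Int[symmetric] sg_index_conj_set)

lemma index_ratio_eq_1_imp_eq:
  fixes E :: "'v \<Rightarrow> 'v \<Rightarrow> bool"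
  assumes A: "bounded_open_subgroup E G A" and B: "bounded_open_subgroup E G B"
    and AB: "A \<subseteq> B" and ratio: "index_ratio A B = 1"
  shows "A = B"
proof -
  have "sg_index B A = 1"
    using ratio index_ratio_via_subgroup[OF A B A] AB
      sg_index_self[OF bounded_open_subgroupD(1)[OF A]] by (auto simp: Int_absorb2)
  then show ?thesis
    using sg_index_eq_1_imp_eq[OF bounded_open_subgroupD(1)[OF B] bounded_open_subgroupD(1)[OF A] AB]
    by simp
qed

lemma modular_fn_eq_index_ratio:
  fixes E :: "'v \<Rightarrow> 'v \<Rightarrow> bool"
  assumes T: "locally_finite_tree E" and G: "closed_subgroup E G" and g: "g \<in> G"
    and V: "bounded_open_subgroup E G V"
  shows "modular_fn E G g = index_ratio V (conj_set g V)"
proof -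
  have G': "aut_subgroup E G" using closed_subgroup_subgroup[OF G] .
  have ga: "g \<in> aut E" using aut_subgroup_aut[OF G' g] .
  define U where "U = (SOME U. compact_open_subgroup E G U)"
  have "compact_open_subgroup E G U"
    unfolding U_def using ex_compact_open_subgroup[OF T G] by (rule someI_ex)
  then have U: "bounded_open_subgroup E G U"
    by (rule compact_open_imp_bounded_open_subgroup[OF G'])
  have gU: "bounded_open_subgroup E G (conj_set g U)" and gV: "bounded_open_subgroup E G (conj_set g V)"
    using bounded_open_subgroup_conj_set[OF G' _ g] U V by auto
  have "modular_fn E G g = index_ratio U (conj_set g U)"
    by (simp add: modular_fn_def index_ratio_def U_def Let_def)
  also have "\<dots> = index_ratio U V * index_ratio V (conj_set g V) * index_ratio (conj_set g V) (conj_set g U)"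
    using index_ratio_trans[OF U V gV] index_ratio_trans[OF U gV gU] by simp
  also have "index_ratio (conj_set g V) (conj_set g U) = index_ratio V U"
    by (rule index_ratio_conj_set[OF ga])
  also have "index_ratio U V * index_ratio V (conj_set g V) * index_ratio V U =
      index_ratio V (conj_set g V) * (index_ratio V U * index_ratio U V)"
    by (simp add: ac_simps)
  also have "index_ratio V U * index_ratio U V = 1"
    using index_ratio_trans[OF V U V] index_ratio_self[OF bounded_open_subgroupD(1)[OF V]] by simp
  finally show ?thesis by simp
qed

lemma modular_fn_inv:
  fixes E :: "'v \<Rightarrow> 'v \<Rightarrow> bool"
  assumes T: "locally_finite_tree E" and G: "closed_subgroup E G" and g: "g \<in> G"
  shows "modular_fn E G (inv g) * modular_fn E G g = 1"
proof -
  have G': "aut_subgroup E G" using closed_subgroup_subgroup[OF G] .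
  have ga: "g \<in> aut E" using aut_subgroup_aut[OF G' g] .
  obtain U where "compact_open_subgroup E G U" using ex_compact_open_subgroup[OF T G] by blast
  then have U: "bounded_open_subgroup E G U"
    by (rule compact_open_imp_bounded_open_subgroup[OF G'])
  have gU: "bounded_open_subgroup E G (conj_set g U)"
    by (rule bounded_open_subgroup_conj_set[OF G' U g])
  have "modular_fn E G (inv g) = index_ratio U (conj_set (inv g) U)"
    by (rule modular_fn_eq_index_ratio[OF T G aut_subgroup_inv[OF G' g] U])
  also have "\<dots> = index_ratio (conj_set g U) U"
    using index_ratio_conj_set[OF ga, of U "conj_set (inv g) U"] ga by simp
  finally have "modular_fn E G (inv g) * modular_fn E G g =
      index_ratio (conj_set g U) U * index_ratio U (conj_set g U)"
    using modular_fn_eq_index_ratio[OF T G g U] by simp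
  also have "\<dots> = 1"
    using index_ratio_trans[OF gU U gU] index_ratio_self[OF bounded_open_subgroupD(1)[OF gU]] by simp
  finally show ?thesis .
qed

lemma modular_fn_eq_1_if_normalises:
  fixes E :: "'v \<Rightarrow> 'v \<Rightarrow> bool"
  assumes T: "locally_finite_tree E" and G: "closed_subgroup E G" and g: "g \<in> G"
    and U: "compact_open_subgroup E G U" and normal: "conj_set g U = U"
  shows "modular_fn E G g = 1"
proof -
  have "bounded_open_subgroup E G U"
    using compact_open_imp_bounded_open_subgroup[OF closed_subgroup_subgroup[OF G] U] .
  then show ?thesis
    using modular_fn_eq_index_ratio[OF T G g] normal
      index_ratio_self[OF bounded_open_subgroupD(1)] by metis
qed

section \<open>Paths, rays and ends\<close>

definition graph_path :: "('v \<Rightarrow> 'v \<Rightarrow> bool) \<Rightarrow> 'v list \<Rightarrow> bool" where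
  "graph_path E xs \<longleftrightarrow> xs \<noteq> [] \<and> distinct xs \<and> successively E xs"

lemma graph_path_tl:
  "graph_path E (a # xs) \<Longrightarrow> xs \<noteq> [] \<Longrightarrow> graph_path E xs"
  by (simp add: graph_path_def successively_Cons)

lemma is_cycleI:
  assumes "length cs \<ge> 3" "distinct cs" "successively E (cs @ [hd cs])"
  shows "is_cycle E cs"
proof -
  have "cs \<noteq> []" using assms(1) by auto
  then have "successively E cs" "E (last cs) (hd cs)"
    using assms(3) by (simp_all add: successively_append_iff)
  then show ?thesis using assms(1,2) by (simp add: is_cycle_def successively_conv_nth)
qed

lemma successively_glue:
  "successively P (xs @ [z]) \<Longrightarrow> successively P (z # ys) \<Longrightarrow> successively P (xs @ z # ys)"
  by (cases "xs = []") (simp_all add: successively_append_iff)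

lemma successively_prefix: "successively P (xs @ ys) \<Longrightarrow> successively P xs"
  by (simp add: successively_append_iff)

lemma diverging_paths_cycle:
  assumes sym: "\<And>x y. E x y \<Longrightarrow> E y x"
    and xs: "graph_path E (a # xs)" and ys: "graph_path E (a # ys)"
    and ne: "xs \<noteq> []" "ys \<noteq> []" and hd: "hd xs \<noteq> hd ys" and last: "last xs = last ys"
  shows "\<exists>cs. is_cycle E cs"
proof -
  have "\<exists>v\<in>set xs. v \<in> set ys" using ne last by (metis last_in_set)
  then obtain A z rest where xs_split: "xs = A @ z # rest" and z: "z \<in> set ys"
    and A: "\<forall>v\<in>set A. v \<notin> set ys"
    using split_list_first_prop[of xs "\<lambda>v. v \<in> set ys"] by blast
  obtain B rest' where ys_split: "ys = B @ z # rest'" and zB: "z \<notin> set B"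
    using split_list_first[OF z] by blast
  define cs where "cs = a # A @ z # rev B"
  have "A \<noteq> [] \<or> B \<noteq> []" using hd xs_split ys_split by auto
  then have "length cs \<ge> 3" by (auto simp: cs_def Suc_le_eq)
  moreover have "distinct cs"
    using xs ys A zB unfolding cs_def graph_path_def xs_split ys_split by auto
  moreover have "successively E (cs @ [hd cs])"
  proof -
    have "successively E ((a # A @ [z]) @ rest)" "successively E ((a # B @ [z]) @ rest')"
      using xs ys by (simp_all add: graph_path_def xs_split ys_split)
    then have forth: "successively E (a # A @ [z])" and backward: "successively E (a # B @ [z])"
      by (blast dest: successively_prefix)+
    have "successively (\<lambda>x y. E y x) (a # B @ [z])"
      using backward sym by (rule successively_mono) blast
    then have "successively E (z # rev B @ [a])"
      using successively_rev[of E "a # B @ [z]"] by simp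
    then have "successively E ((a # A) @ z # rev B @ [a])"
      using successively_glue[of E "a # A" z] forth by simp
    then show ?thesis by (simp add: cs_def)
  qed
  ultimately show ?thesis using is_cycleI by blast
qed

lemma tree_path_unique:
  assumes sym: "\<And>x y. E x y \<Longrightarrow> E y x" and acyclic: "\<And>cs. \<not> is_cycle E cs"
  shows "graph_path E xs \<Longrightarrow> graph_path E ys \<Longrightarrow> hd xs = hd ys \<Longrightarrow> last xs = last ys \<Longrightarrow> xs = ys"
proof (induction xs arbitrary: ys)
  case Nil
  then show ?case by (simp add: graph_path_def)
next
  case (Cons a xs)
  obtain ys' where ys: "ys = a # ys'"
    using Cons.prems(2,3) by (cases ys) (auto simp: graph_path_def)
  have path: "graph_path E (a # xs)" "graph_path E (a # ys')"
    using Cons.prems(1,2) ys by simp_all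
  have no_return: "last zs \<noteq> a" if "graph_path E (a # zs)" "zs \<noteq> []" for zs
    using that by (auto simp: graph_path_def)
  have last: "last (a # xs) = last (a # ys')" using Cons.prems(4) ys by simp
  show ?case
  proof (cases "xs = [] \<or> ys' = []")
    case True
    then have "xs = [] \<and> ys' = []"
      using last no_return[OF path(1)] no_return[OF path(2)] by (cases "xs = []"; cases "ys' = []") auto
    then show ?thesis using ys by simp
  next
    case False
    then have last': "last xs = last ys'" using last by simp
    show ?thesis
    proof (cases "hd xs = hd ys'")
      case True
      have "xs = ys'"
        using Cons.IH[OF graph_path_tl[OF path(1)] graph_path_tl[OF path(2)] True last'] False
        by simp
      then show ?thesis using ys by simp
    next
      case hd: False
      have "\<exists>cs. is_cycle E cs"
        using diverging_paths_cycle[OF sym path] False hd last' by simp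
      then show ?thesis using acyclic by blast
    qed
  qed
qed

lemma graph_path_map_upt:
  assumes "inj f" "\<And>t. E (f t) (f (Suc t))" "a < b"
  shows "graph_path E (map f [a..<b])"
  using assms inj_on_subset[OF assms(1) subset_UNIV]
  by (auto simp: graph_path_def distinct_map successively_conv_nth)

lemma ray_inj_iff: "ray E p \<Longrightarrow> p x = p y \<longleftrightarrow> x = y"
  by (auto simp: ray_def inj_def)

lemma aut_fixes_ray_beyond:
  assumes T: "locally_finite_tree E" and p: "ray E p" and h: "h \<in> aut E"
    and fe: "fixes_end h p" and hk: "h (p k) = p k" and km: "k \<le> m"
  shows "h (p m) = p m"
proof -
  obtain i j where ij: "\<And>n. h (p (n + i)) = p (n + j)"
    using fe unfolding fixes_end_def ray_equiv_def by auto
  define xs where "xs = map (h \<circ> p) [k..<Suc (m + i)]"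
  define ys where "ys = map p [k..<Suc (m + j)]"
  have "inj (h \<circ> p)"
    using p h by (auto simp: ray_def inj_def aut_inj_iff)
  then have "graph_path E xs" "graph_path E ys"
    unfolding xs_def ys_def using p h km
    by (auto intro!: graph_path_map_upt simp: ray_def aut_edge_iff simp del: upt_Suc)
  moreover have "hd xs = hd ys"
    using km hk by (simp add: xs_def ys_def upt_conv_Cons del: upt_Suc)
  moreover have "last xs = last ys"
    using ij[of m] km by (simp add: xs_def ys_def)
  ultimately have "xs = ys"
    using tree_path_unique T unfolding locally_finite_tree_def by blast
  then have "xs ! (m - k) = ys ! (m - k)" by simp
  then show ?thesis using km by (simp add: xs_def ys_def del: upt_Suc)
qed

lemma ray_equiv_sym: "ray_equiv p q \<Longrightarrow> ray_equiv q p"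
  unfolding ray_equiv_def by metis

lemma ray_equiv_trans:
  assumes "ray_equiv p q" "ray_equiv q s"
  shows "ray_equiv p s"
proof -
  obtain a b c d where pq: "\<And>n. p (n + a) = q (n + b)" and qs: "\<And>n. q (n + c) = s (n + d)"
    using assms unfolding ray_equiv_def by blast
  have "p (n + (a + c)) = s (n + (b + d))" for n
    using pq[of "n + c"] qs[of "n + b"] by (simp add: ac_simps)
  then show ?thesis unfolding ray_equiv_def by blast
qed

lemma fixes_end_cong:
  assumes pq: "ray_equiv p q" and fe: "fixes_end h p"
  shows "fixes_end h q"
proof -
  obtain a b where pq': "\<And>n. p (n + a) = q (n + b)" using pq unfolding ray_equiv_def by blast
  obtain i j where ij: "\<And>n. h (p (n + i)) = p (n + j)"
    using fe unfolding fixes_end_def ray_equiv_def by auto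
  have "h (q (n + (b + i))) = q (n + (b + j))" for n
    using pq'[of "n + i"] pq'[of "n + j"] ij[of "n + a"] by (simp add: ac_simps)
  then show ?thesis unfolding fixes_end_def ray_equiv_def by auto
qed

lemma end_stab_cong: "ray_equiv p q \<Longrightarrow> end_stab G p = end_stab G q"
  unfolding end_stab_def using fixes_end_cong ray_equiv_sym by blast

lemma fixes_end_if_eventually_fixed: "(\<And>n. n \<ge> k \<Longrightarrow> h (p n) = p n) \<Longrightarrow> fixes_end h p"
  unfolding fixes_end_def ray_equiv_def by (intro exI[of _ k]) auto

lemma fixes_end_comp:
  assumes "fixes_end a p" "fixes_end b p"
  shows "fixes_end (a \<circ> b) p"
proof -
  obtain i j k l where ij: "\<And>n. a (p (n + i)) = p (n + j)" and kl: "\<And>n. b (p (n + k)) = p (n + l)"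
    using assms unfolding fixes_end_def ray_equiv_def by auto
  have "(a \<circ> b) (p (n + (k + i))) = p (n + (l + j))" for n
    using kl[of "n + i"] ij[of "n + l"] by (simp add: ac_simps)
  then show ?thesis unfolding fixes_end_def ray_equiv_def by auto
qed

lemma fixes_end_inv:
  assumes h: "h \<in> aut E" and fe: "fixes_end h p"
  shows "fixes_end (inv h) p"
proof -
  obtain i j where ij: "\<And>n. h (p (n + i)) = p (n + j)"
    using fe unfolding fixes_end_def ray_equiv_def by auto
  have "inv h (p (n + j)) = p (n + i)" for n using ij[of n] aut_inv_apply[OF h] by metis
  then show ?thesis unfolding fixes_end_def ray_equiv_def by auto
qed

lemma fixes_end_inv_iff: "h \<in> aut E \<Longrightarrow> fixes_end (inv h) p \<longleftrightarrow> fixes_end h p"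
  using fixes_end_inv aut_inv aut_inv_inv by metis

lemma aut_subgroup_end_stab:
  assumes G: "aut_subgroup E G"
  shows "aut_subgroup E (end_stab G p)"
  unfolding aut_subgroup_def
proof (intro conjI ballI)
  show "end_stab G p \<subseteq> aut E" using aut_subgroup_aut[OF G] by (auto simp: end_stab_def)
  show "id \<in> end_stab G p"
    using aut_subgroup_id[OF G] fixes_end_if_eventually_fixed[of 0 id p] by (simp add: end_stab_def)
next
  fix a b assume "a \<in> end_stab G p" "b \<in> end_stab G p"
  then show "a \<circ> b \<in> end_stab G p"
    by (auto simp: end_stab_def intro!: fixes_end_comp aut_subgroup_comp[OF G])
next
  fix a assume "a \<in> end_stab G p"
  then show "inv a \<in> end_stab G p"
    using fixes_end_inv[OF aut_subgroup_aut[OF G]] aut_subgroup_inv[OF G] by (simp add: end_stab_def)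
qed

section \<open>Translation along a ray\<close>

locale ray_translation =
  fixes E :: "'v \<Rightarrow> 'v \<Rightarrow> bool" and a :: "'v \<Rightarrow> 'v" and p :: "nat \<Rightarrow> 'v" and i c :: nat
  assumes tree: "locally_finite_tree E" and aut: "a \<in> aut E" and ray: "ray E p"
    and period: "c > 0" and shift: "\<And>m. i \<le> m \<Longrightarrow> a (p m) = p (m + c)"
begin

lemma funpow_shift: "i \<le> m \<Longrightarrow> (a ^^ t) (p m) = p (m + t * c)"
  by (induction t) (simp_all add: shift algebra_simps)

lemma less_Suc_times_period: "n \<le> N \<Longrightarrow> n < Suc N * c"
  using mult_le_mono2[of 1 c "Suc N"] period by simp

text \<open>The point \<open>p (i + N * c - n)\<close> pulled back by \<open>a ^^ N\<close> does not depend on \<open>N > n\<close>;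
  these points form a ray towards the other end fixed by \<open>a\<close>.\<close>

definition backward_ray :: "nat \<Rightarrow> 'v" where
  "backward_ray n = (inv a ^^ Suc n) (p (i + Suc n * c - n))"

lemma funpow_backward_ray:
  assumes N: "Suc n \<le> N"
  shows "(a ^^ N) (backward_ray n) = p (i + N * c - n)"
proof -
  have n: "n < Suc n * c" by (rule less_Suc_times_period) simp
  have "a ^^ N = a ^^ (N - Suc n) \<circ> a ^^ Suc n"
    using N funpow_add[of "N - Suc n" "Suc n" a] by simp
  then have "(a ^^ N) (backward_ray n) = (a ^^ (N - Suc n)) (p (i + Suc n * c - n))"
    using aut_funpow_apply_inv[OF aut, of "Suc n"] by (simp add: backward_ray_def del: funpow.simps)
  also have "\<dots> = p (i + Suc n * c - n + (N - Suc n) * c)"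
    using n by (intro funpow_shift) simp
  also have "i + Suc n * c - n + (N - Suc n) * c = i + N * c - n"
    using n mult_le_mono1[OF N, of c] by (simp add: diff_mult_distrib)
  finally show ?thesis .
qed

lemma funpow_inj_iff: "(a ^^ N) x = (a ^^ N) y \<longleftrightarrow> x = y"
  using aut_inj_iff[OF aut_funpow[OF aut]] .

lemma inj_backward_ray: "inj backward_ray"
proof (rule injI)
  fix n m assume eq: "backward_ray n = backward_ray m"
  define N where "N = Suc (n + m)"
  have "p (i + N * c - n) = p (i + N * c - m)"
    using eq funpow_backward_ray[of n N] funpow_backward_ray[of m N] by (simp add: N_def)
  moreover have "n \<le> N * c" "m \<le> N * c"
    using less_Suc_times_period[of _ "n + m"] by (simp_all add: N_def less_imp_le)
  ultimately show "n = m" using ray_inj_iff[OF ray] by simp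
qed

lemma backward_ray_edge: "E (backward_ray n) (backward_ray (Suc n))"
proof -
  define N where "N = Suc (Suc n)"
  have le: "Suc n \<le> N * c"
    using less_Suc_times_period[of "Suc n" "Suc n"] by (simp add: N_def)
  have "E (p (i + N * c - Suc n)) (p (Suc (i + N * c - Suc n)))"
    using ray by (simp add: ray_def)
  then have "E (p (i + N * c - n)) (p (i + N * c - Suc n))"
    using tree le by (simp add: locally_finite_tree_def Suc_diff_Suc)
  moreover have "Suc n \<le> N" "Suc (Suc n) \<le> N" by (simp_all add: N_def)
  ultimately have "E ((a ^^ N) (backward_ray n)) ((a ^^ N) (backward_ray (Suc n)))"
    by (simp add: funpow_backward_ray)
  then show ?thesis using aut_edge_iff[OF aut_funpow[OF aut]] by blast
qed

lemma ray_backward_ray: "ray E backward_ray"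
  unfolding ray_def using inj_backward_ray backward_ray_edge by blast

lemma shift_backward_ray: "a (backward_ray (n + c)) = backward_ray n"
proof -
  define N where "N = Suc (n + c)"
  have "(a ^^ N) (a (backward_ray (n + c))) = (a ^^ Suc N) (backward_ray (n + c))"
    by (simp add: funpow_swap1)
  also have "\<dots> = p (i + Suc N * c - (n + c))"
    by (rule funpow_backward_ray) (simp add: N_def)
  also have "\<dots> = p (i + N * c - n)" by simp
  also have "\<dots> = (a ^^ N) (backward_ray n)"
    by (rule funpow_backward_ray[symmetric]) (simp add: N_def)
  finally show ?thesis using funpow_inj_iff by blast
qed

lemma backward_ray_to_ray:
  assumes "n \<le> c"
  shows "a (backward_ray n) = p (i + c - n)"
proof -
  have "(a ^^ Suc n) (a (backward_ray n)) = (a ^^ Suc (Suc n)) (backward_ray n)"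
    by (simp add: funpow_swap1)
  also have "\<dots> = p (i + Suc (Suc n) * c - n)"
    by (rule funpow_backward_ray) simp
  also have "\<dots> = p (i + c - n + Suc n * c)"
    using assms by (simp add: add.assoc)
  also have "\<dots> = (a ^^ Suc n) (p (i + c - n))"
    by (rule funpow_shift[symmetric]) (use assms in simp)
  finally show ?thesis using funpow_inj_iff by blast
qed

lemma fixes_end_backward_ray: "fixes_end a backward_ray"
  unfolding fixes_end_def ray_equiv_def
  using shift_backward_ray by (intro exI[of _ c] exI[of _ 0]) simp

lemma not_ray_equiv_backward_ray: "\<not> ray_equiv backward_ray p"
proof
  assume "ray_equiv backward_ray p"
  then obtain I J where IJ: "\<And>n. backward_ray (n + I) = p (n + J)"
    unfolding ray_equiv_def by blast
  define N where "N = Suc (Suc i + I)"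
  have "p (i + N * c - (Suc i + I)) = (a ^^ N) (p (Suc i + J))"
    using funpow_backward_ray[of "Suc i + I" N] IJ[of "Suc i"] by (simp add: N_def)
  also have "\<dots> = p (Suc i + J + N * c)" by (simp add: funpow_shift)
  finally show False using ray_inj_iff[OF ray] by simp
qed

lemma backward_ray_in_preimage: "backward_ray n \<in> (inv a ^^ Suc n) ` p ` {i..}"
  unfolding backward_ray_def using less_Suc_times_period[of n n] by (intro imageI) simp

definition axis :: "int \<Rightarrow> 'v" where
  "axis z = (if 0 \<le> z then p (i + nat z) else backward_ray (nat (- z)))"

lemma shift_axis: "a (axis z) = axis (z + int c)"
proof -
  consider "0 \<le> z" | "z < 0" "0 \<le> z + int c" | "z + int c < 0" by linarith
  then show ?thesis
  proof cases
    case 1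
    then show ?thesis by (simp add: axis_def shift nat_add_distrib ac_simps)
  next
    case 2
    define n where "n = nat (- z)"
    have "n \<le> c" "nat (z + int c) = c - n" using 2 by (simp_all add: n_def)
    then show ?thesis using 2 by (simp add: axis_def backward_ray_to_ray flip: n_def)
  next
    case 3
    then have "nat (- z) = nat (- (z + int c)) + c" by linarith
    then show ?thesis using 3 by (simp add: axis_def shift_backward_ray)
  qed
qed

lemma axis_invariant: "a ` range axis = range axis"
proof
  show "a ` range axis \<subseteq> range axis" using shift_axis by auto
  show "range axis \<subseteq> a ` range axis"
  proof
    fix y assume "y \<in> range axis"
    then obtain z where "y = axis z" by blast
    then have "y = a (axis (z - int c))" using shift_axis[of "z - int c"] by simp
    then show "y \<in> a ` range axis" by blast
  qed
qed

end

lemma openin_end_stab_iff: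
  assumes G: "aut_subgroup E G"
  shows "openin (subtopology (aut_top E) G) (end_stab G p) \<longleftrightarrow>
    (\<exists>F. finite F \<and> pointwise_stab G F \<subseteq> end_stab G p)"
  by (rule openin_subgroup_iff[OF G aut_subgroup_end_stab[OF G]]) (auto simp: end_stab_def)

lemma pointwise_stab_subset_ray_tail:
  assumes T: "locally_finite_tree E" and G: "aut_subgroup E G" and p: "ray E p"
    and F: "pointwise_stab G F \<subseteq> end_stab G p"
  shows "pointwise_stab G (F \<union> {p k}) \<subseteq> pointwise_stab G (p ` {k..})"
proof
  fix h assume h: "h \<in> pointwise_stab G (F \<union> {p k})"
  then have "h \<in> G" "h (p k) = p k" "fixes_end h p"
    using F by (auto simp: pointwise_stab_def end_stab_def)
  then have "h (p m) = p m" if "k \<le> m" for m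
    using aut_fixes_ray_beyond[OF T p aut_subgroup_aut[OF G]] that by blast
  then show "h \<in> pointwise_stab G (p ` {k..})"
    using \<open>h \<in> G\<close> by (auto simp: pointwise_stab_def)
qed

lemma conj_set_funpow_inv:
  assumes g: "g \<in> aut E" and normal: "conj_set g W = W"
  shows "conj_set (inv g ^^ n) W = W"
proof (induction n)
  case (Suc n)
  have "conj_set (inv g ^^ Suc n) W = conj_set (inv g) (conj_set (inv g ^^ n) W)"
    using conj_set_conj_set[OF aut_inv[OF g] aut_funpow[OF aut_inv[OF g]]] by simp
  also have "\<dots> = conj_set (inv g) (conj_set g W)" using Suc normal by simp
  also have "\<dots> = W" using g by simp
  finally show ?case .
qed (simp add: conj_set_def id_def[symmetric])

context ray_translation
begin

lemma normalised_tail_stab_subset_end_stab: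
  assumes G: "aut_subgroup E G" and aG: "a \<in> G"
    and normal: "conj_set a (pointwise_stab G (p ` {i..})) = pointwise_stab G (p ` {i..})"
  shows "pointwise_stab G (p ` {i..}) \<subseteq> end_stab G backward_ray"
proof
  fix h assume h: "h \<in> pointwise_stab G (p ` {i..})"
  have "h (backward_ray n) = backward_ray n" for n
  proof -
    have "inv a ^^ Suc n \<in> G" by (rule aut_subgroup_funpow[OF G aut_subgroup_inv[OF G aG]])
    then have "pointwise_stab G (p ` {i..}) = pointwise_stab G ((inv a ^^ Suc n) ` p ` {i..})"
      using conj_set_funpow_inv[OF aut normal, of "Suc n"] conj_set_pointwise_stab[OF G] by simp
    moreover have "backward_ray n \<in> (inv a ^^ Suc n) ` p ` {i..}" by (rule backward_ray_in_preimage)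
    ultimately show ?thesis using h unfolding pointwise_stab_def by blast
  qed
  then have "fixes_end h backward_ray" by (intro fixes_end_if_eventually_fixed[of 0]) simp
  moreover have "h \<in> G" using h by (simp add: pointwise_stab_def)
  ultimately show "h \<in> end_stab G backward_ray" by (simp add: end_stab_def)
qed

lemma openin_end_stab_backward_ray:
  assumes G: "closed_subgroup E G" and aG: "a \<in> G"
    and open_p: "openin (subtopology (aut_top E) G) (end_stab G p)"
    and unimodular: "modular_fn E G a = 1"
  shows "openin (subtopology (aut_top E) G) (end_stab G backward_ray)"
proof -
  have G': "aut_subgroup E G" using closed_subgroup_subgroup[OF G] .
  obtain F where F: "finite F" "pointwise_stab G F \<subseteq> end_stab G p"
    using open_p openin_end_stab_iff[OF G'] by blast
  define W where "W = pointwise_stab G (p ` {i..})"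
  have small: "pointwise_stab G (F \<union> {p i}) \<subseteq> W"
    unfolding W_def by (rule pointwise_stab_subset_ray_tail[OF tree G' ray F(2)])
  have "compact_open_subgroup E G W"
    unfolding W_def using F(1) small[unfolded W_def]
    by (intro compact_open_subgroup_pointwise_stab[OF tree G, of "p i" _ "F \<union> {p i}"]) auto
  then have W: "bounded_open_subgroup E G W"
    by (rule compact_open_imp_bounded_open_subgroup[OF G'])
  have aW: "bounded_open_subgroup E G (conj_set a W)"
    by (rule bounded_open_subgroup_conj_set[OF G' W aG])
  have "a ` p ` {i..} \<subseteq> p ` {i..}" using shift by auto
  then have "W \<subseteq> conj_set a W"
    unfolding W_def conj_set_pointwise_stab[OF G' aG] by (rule pointwise_stab_antimono)
  moreover have "index_ratio W (conj_set a W) = 1"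
    using modular_fn_eq_index_ratio[OF tree G aG W] unimodular by simp
  ultimately have normal: "conj_set a W = W"
    using index_ratio_eq_1_imp_eq[OF W aW] by simp
  have "W \<subseteq> end_stab G backward_ray"
    unfolding W_def by (rule normalised_tail_stab_subset_end_stab[OF G' aG normal[unfolded W_def]])
  then have "finite (F \<union> {p i}) \<and> pointwise_stab G (F \<union> {p i}) \<subseteq> end_stab G backward_ray"
    using small F(1) by blast
  then show ?thesis unfolding openin_end_stab_iff[OF G'] by blast
qed

lemma normalises_compact_open_subgroup:
  assumes G: "closed_subgroup E G" and aG: "a \<in> G"
    and open_p: "openin (subtopology (aut_top E) G) (end_stab G p)"
    and open_backward: "openin (subtopology (aut_top E) G) (end_stab G backward_ray)"
  shows "\<exists>U. compact_open_subgroup E G U \<and> conj_set a U = U"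
proof -
  have G': "aut_subgroup E G" using closed_subgroup_subgroup[OF G] .
  obtain F1 where F1: "finite F1" "pointwise_stab G F1 \<subseteq> end_stab G p"
    using open_p openin_end_stab_iff[OF G'] by blast
  obtain F2 where F2: "finite F2" "pointwise_stab G F2 \<subseteq> end_stab G backward_ray"
    using open_backward openin_end_stab_iff[OF G'] by blast
  define F where "F = (F1 \<union> {p i}) \<union> (F2 \<union> {backward_ray 0})"
  have "pointwise_stab G F = pointwise_stab G (F1 \<union> {p i}) \<inter> pointwise_stab G (F2 \<union> {backward_ray 0})"
    unfolding F_def by (rule pointwise_stab_Un)
  also have "\<dots> \<subseteq> pointwise_stab G (p ` {i..}) \<inter> pointwise_stab G (backward_ray ` {0..})"
    using pointwise_stab_subset_ray_tail[OF tree G' ray F1(2)]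
      pointwise_stab_subset_ray_tail[OF tree G' ray_backward_ray F2(2)] by blast
  also have "\<dots> = pointwise_stab G (p ` {i..} \<union> backward_ray ` {0..})"
    by (rule pointwise_stab_Un[symmetric])
  also have "\<dots> \<subseteq> pointwise_stab G (range axis)"
    by (rule pointwise_stab_antimono) (auto simp: axis_def)
  finally have "compact_open_subgroup E G (pointwise_stab G (range axis))"
    using F1(1) F2(1)
    by (intro compact_open_subgroup_pointwise_stab[OF tree G, of "axis 0" _ F]) (simp_all add: F_def)
  moreover have "conj_set a (pointwise_stab G (range axis)) = pointwise_stab G (range axis)"
    by (simp add: conj_set_pointwise_stab[OF G' aG] axis_invariant)
  ultimately show ?thesis by blast
qed

end

lemma translation_along_fixed_end:
  assumes g: "g \<in> aut E" and free: "\<forall>x. g x \<noteq> x" and fe: "fixes_end g p"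
  obtains a i c where "a \<in> {g, inv g}" "c > 0" "\<And>m. i \<le> m \<Longrightarrow> a (p m) = p (m + c)"
proof -
  obtain i j where ij: "\<And>n. g (p (n + i)) = p (n + j)"
    using fe unfolding fixes_end_def ray_equiv_def by auto
  have "i \<noteq> j" using ij[of 0] free by auto
  then consider "i < j" | "j < i" by linarith
  then show ?thesis
  proof cases
    case 1
    have "g (p m) = p (m + (j - i))" if "i \<le> m" for m
      using ij[of "m - i"] 1 that by simp
    then show ?thesis using that[of g "j - i" i] 1 by simp
  next
    case 2
    have "inv g (p m) = p (m + (i - j))" if "j \<le> m" for m
    proof -
      have "g (p (m - j + i)) = p m" using ij[of "m - j"] that by simp
      then have "inv g (p m) = p (m - j + i)" using aut_inv_apply[OF g, of "p (m - j + i)"] by simp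
      then show ?thesis using 2 that by simp
    qed
    then show ?thesis using that[of "inv g" "i - j" j] 2 by simp
  qed
qed

lemma hyperbolic_fixed_end_cases:
  assumes hyp: "hyperbolic E g" and p: "ray E p" and q: "ray E q" and pq: "\<not> ray_equiv p q"
    and fp: "fixes_end g p" and fq: "fixes_end g q" and s: "ray E s" and fs: "fixes_end g s"
  shows "ray_equiv s p \<or> ray_equiv s q"
proof -
  obtain s1 s2 where ends: "\<And>r. ray E r \<Longrightarrow> fixes_end g r \<Longrightarrow> ray_equiv r s1 \<or> ray_equiv r s2"
    using hyp unfolding hyperbolic_def by blast
  have "\<not> (ray_equiv p t \<and> ray_equiv q t)" for t
    using pq ray_equiv_trans ray_equiv_sym by blast
  then show ?thesis
    using ends[OF p fp] ends[OF q fq] ends[OF s fs] ray_equiv_trans ray_equiv_sym by blast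
qed

lemma end_stab_openness_transfer:
  fixes E :: "'v \<Rightarrow> 'v \<Rightarrow> bool"
  assumes T: "locally_finite_tree E" and G: "closed_subgroup E G" and gG: "g \<in> G"
    and hyp: "hyperbolic E g" and p: "ray E p" and q: "ray E q" and pq: "\<not> ray_equiv p q"
    and fp: "fixes_end g p" and fq: "fixes_end g q"
    and open_p: "openin (subtopology (aut_top E) G) (end_stab G p)"
  shows "g \<in> G0 E G \<Longrightarrow> openin (subtopology (aut_top E) G) (end_stab G q)"
    and "openin (subtopology (aut_top E) G) (end_stab G q) \<Longrightarrow>
      \<exists>U. compact_open_subgroup E G U \<and> conj_set g U = U"
proof -
  have G': "aut_subgroup E G" using closed_subgroup_subgroup[OF G] .
  have g: "g \<in> aut E" using aut_subgroup_aut[OF G' gG] .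
  obtain a i c where a: "a \<in> {g, inv g}" and translation: "c > 0" "\<And>m. i \<le> m \<Longrightarrow> a (p m) = p (m + c)"
    using translation_along_fixed_end[OF g _ fp] hyp unfolding hyperbolic_def by metis
  have aG: "a \<in> G" using a gG aut_subgroup_inv[OF G' gG] by auto
  interpret ray_translation E a p i c
    using T aut_subgroup_aut[OF G' aG] p translation by unfold_locales
  have "fixes_end g backward_ray"
    using a fixes_end_backward_ray fixes_end_inv_iff[OF g] by auto
  then have "ray_equiv backward_ray q"
    using hyperbolic_fixed_end_cases[OF hyp p q pq fp fq ray_backward_ray] not_ray_equiv_backward_ray
    by blast
  then have stab_q: "end_stab G backward_ray = end_stab G q" by (rule end_stab_cong)
  show "openin (subtopology (aut_top E) G) (end_stab G q)" if "g \<in> G0 E G"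
  proof -
    have "modular_fn E G a = 1"
      using that a modular_fn_inv[OF T G gG] by (auto simp: G0_def)
    then show ?thesis
      using openin_end_stab_backward_ray[OF G aG open_p] stab_q by simp
  qed
  show "\<exists>U. compact_open_subgroup E G U \<and> conj_set g U = U"
    if open_q: "openin (subtopology (aut_top E) G) (end_stab G q)"
  proof -
    obtain U where "compact_open_subgroup E G U" "conj_set a U = U"
      using normalises_compact_open_subgroup[OF G aG open_p] open_q stab_q by auto
    moreover have "conj_set g U = U" if "conj_set (inv g) U = U"
      using arg_cong[OF that, of "conj_set g"] g by simp
    ultimately show ?thesis using a by auto
  qed
qed

theorem proposition3p4:
  fixes E :: "'v \<Rightarrow> 'v \<Rightarrow> bool" and G :: "('v \<Rightarrow> 'v) set"
    and g :: "'v \<Rightarrow> 'v" and r1 r2 :: "nat \<Rightarrow> 'v"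
  assumes "locally_finite_tree E"
    and "closed_subgroup E G"
    and "g \<in> G" and "hyperbolic E g"
    and "ray E r1" and "ray E r2" and "\<not> ray_equiv r1 r2"
    and "fixes_end g r1" and "fixes_end g r2"
  shows "(openin (subtopology (aut_top E) G) (end_stab G r1) \<or>
          openin (subtopology (aut_top E) G) (end_stab G r2) \<longrightarrow>
          ((openin (subtopology (aut_top E) G) (end_stab G r1) \<and>
            openin (subtopology (aut_top E) G) (end_stab G r2)) \<longleftrightarrow> g \<in> G0 E G) \<and>
          (g \<in> G0 E G \<longleftrightarrow>
            (\<exists>U. compact_open_subgroup E G U \<and> conj_set g U = U)))
     \<and> (g \<in> G0 E G \<longrightarrow>
          (openin (subtopology (aut_top E) G) (end_stab G r1) \<longleftrightarrow>
           openin (subtopology (aut_top E) G) (end_stab G r2)))"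
proof -
  have normaliser_unimodular: "g \<in> G0 E G" if "compact_open_subgroup E G U" "conj_set g U = U" for U
    using modular_fn_eq_1_if_normalises[OF assms(1-3) that] assms(3) by (simp add: G0_def)
  note transfer12 = end_stab_openness_transfer[OF assms(1-7) assms(8,9)]
  have "\<not> ray_equiv r2 r1" using assms(7) ray_equiv_sym by blast
  note transfer21 = end_stab_openness_transfer[OF assms(1-4,6,5) this assms(9,8)]
  show ?thesis using transfer12 transfer21 normaliser_unimodular by blast
qed

end
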